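(* Let $X\in\{\pm1\}$ be a binary random variable with mean $\mu\in[-1,1]$, let $Y$ be an observation of $X$ through a BMS channel with capacity $C$, and let $U$ be another observation on the same probability space such that $U-X-Y$ forms a Markov chain. Then $$\mathrm{BER}(X\mid Y,U)\ge\mathrm{BER}(X\mid Y)-\sqrt{\frac{\ln(2)(1-C)\big(1-\mathrm{mmse}(X\mid U)\big)}{2}}.$$
   Context: BMS channel: input $\{\pm1\}$, output in $\overline{\mathbb{R}}$, transition density with $w(y\mid+1)=w(-y\mid-1)$; its capacity is $I(X_{\mathrm u};Y_{\mathrm u})$ for uniform input $X_{\mathrm u}$. $\mathrm{BER}(X\mid V)=\Pr(X\neq\phi(V))$ with $\phi$ the MAP decision rule for $X$ given $V$; $\mathrm{mmse}(X\mid V)=\mathbb{E}[(X-\mathbb{E}[X\mid V])^2]$. *)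

theory Defs
  imports "HOL-Probability.Probability"
begin

text \<open>Inputs are encoded as the reals -1 and 1.  A BMS channel is a Markov kernel
  W from the input alphabet to probability measures on the extended reals (Borel),
  satisfying the symmetry w(y|+1) = w(-y|-1), i.e. W(-1) is the image of W(+1)
  under negation.\<close>

definition bms_channel :: "(real \<Rightarrow> ereal measure) \<Rightarrow> bool" where
  "bms_channel W \<longleftrightarrow>
     prob_space (W 1) \<and> sets (W 1) = sets (borel :: ereal measure) \<and>
     W (-1) = distr (W 1) borel uminus"

definition uniform_input_joint :: "(real \<Rightarrow> ereal measure) \<Rightarrow> (real \<times> ereal) measure" where
  "uniform_input_joint W =
     bind (uniform_count_measure {-1, 1 :: real})
          (\<lambda>x. distr (W x) (borel \<Otimes>\<^sub>M borel) (\<lambda>y. (x, y)))"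

definition bms_capacity :: "(real \<Rightarrow> ereal measure) \<Rightarrow> real" where
  "bms_capacity W =
     prob_space.mutual_information (uniform_input_joint W) 2 borel borel fst snd"

definition gen_sigma :: "'a measure \<Rightarrow> ('a \<Rightarrow> 'b) \<Rightarrow> 'b measure \<Rightarrow> 'a measure" where
  "gen_sigma M V N = vimage_algebra (space M) V N"

text \<open>MAP decision for a \<plusminus>1-valued X given the sigma-algebra F: choose the value
  with the larger posterior, i.e. sign of E[X | F] (ties broken towards +1).\<close>

definition map_decision :: "'a measure \<Rightarrow> 'a measure \<Rightarrow> ('a \<Rightarrow> real) \<Rightarrow> 'a \<Rightarrow> real" where
  "map_decision M F X = (\<lambda>\<omega>. if real_cond_exp M F X \<omega> \<ge> 0 then 1 else -1)"

definition BER :: "'a measure \<Rightarrow> 'a measure \<Rightarrow> ('a \<Rightarrow> real) \<Rightarrow> real" where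
  "BER M F X = measure M {\<omega> \<in> space M. X \<omega> \<noteq> map_decision M F X \<omega>}"

definition mmse :: "'a measure \<Rightarrow> 'a measure \<Rightarrow> ('a \<Rightarrow> real) \<Rightarrow> real" where
  "mmse M F X = (\<integral>\<omega>. (X \<omega> - real_cond_exp M F X \<omega>)\<^sup>2 \<partial>M)"

end

theory Submission
  imports Defs
begin

text \<open>
  Let t(y) be the posterior probability of the input 1 given the output y under uniform input,
  and nu the output law. Then W 1 and W (-1) have the nu-densities 2 t and 2 (1 - t), and
  ln 2 (1 - C) is the nu-integral of h(t), with h the binary entropy in nats. The MAP error rate
  of the channel under uniform input, e = int min(t, 1 - t) dnu, therefore satisfies
  e^2 <= int min(t, 1 - t)^2 dnu <= int h(t)/2 dnu = ln 2 (1 - C) / 2.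

  Averaging the MAP region of the channel with its mirror image under y -> -y gives
  BER(X|Y) <= e whatever the prior of X. Conversely, given U = u, a decision based on (Y, U) is
  a decision region for the channel alone; by the Markov property its conditional error
  probabilities a(u), b(u) given X = 1 and X = -1 satisfy a + b >= 2 e. Weighting them with the
  conditional probabilities (1 +- E[X|U]) / 2 gives
  BER(X|Y,U) >= e (1 - E|E[X|U]|) >= e (1 - sqrt(1 - mmse(X|U))).
\<close>

definition binary_entropy :: "real \<Rightarrow> real" where
  "binary_entropy t = - t * ln t - (1 - t) * ln (1 - t)"

lemma binary_entropy_ge_sq:
  fixes t :: real assumes "0 \<le> t" "t \<le> 1/2"
  shows "2 * t\<^sup>2 \<le> binary_entropy t"
proof -
  have "t\<^sup>2 \<le> - t * ln t"
  proof (cases "t = 0")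
    case False
    then have "ln t \<le> t - 1" using assms by (intro ln_le_minus_one) auto
    then have "t * ln t \<le> t * (t - 1)" using assms by (intro mult_left_mono) auto
    moreover have "t * (2 * t) \<le> t * 1" using assms by (intro mult_left_mono) auto
    ultimately show ?thesis by (simp add: power2_eq_square algebra_simps)
  qed simp
  moreover have "t\<^sup>2 \<le> - ((1 - t) * ln (1 - t))"
  proof -
    have "ln (1 - t) \<le> (1 - t) - 1" using assms by (intro ln_le_minus_one) auto
    then have "(1 - t) * ln (1 - t) \<le> (1 - t) * (- t)" using assms by (intro mult_left_mono) auto
    moreover have "t * (2 * t) \<le> t * 1" using assms by (intro mult_left_mono) auto
    ultimately show ?thesis by (simp add: power2_eq_square algebra_simps)
  qed
  ultimately show ?thesis unfolding binary_entropy_def by simp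
qed

lemma binary_entropy_ge_sq_min:
  fixes t :: real assumes "0 \<le> t" "t \<le> 1"
  shows "2 * (min t (1 - t))\<^sup>2 \<le> binary_entropy t"
proof (cases "t \<le> 1/2")
  case True
  then show ?thesis using binary_entropy_ge_sq[of t] assms by (simp add: min_def)
next
  case False
  have "binary_entropy t = binary_entropy (1 - t)"
    unfolding binary_entropy_def by (simp add: algebra_simps)
  then show ?thesis using binary_entropy_ge_sq[of "1 - t"] assms False by (simp add: min_def)
qed

lemma binary_entropy_eq_bits:
  fixes t :: real assumes "0 \<le> t" "t \<le> 1"
  shows "binary_entropy t = ln 2 * (1 - (t * log 2 (2 * t) + (1 - t) * log 2 (2 * (1 - t))))"
proof -
  have bits: "x * log 2 (2 * x) = x + x * ln x / ln 2" if "0 \<le> x" for x :: real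
  proof (cases "x = 0")
    case False
    then have "log 2 (2 * x) = 1 + log 2 x" using that by (simp add: log_mult)
    then show ?thesis by (simp add: log_def algebra_simps)
  qed simp
  have "0 \<le> 1 - t" using assms by simp
  then show ?thesis
    unfolding bits[OF assms(1)] bits[OF \<open>0 \<le> 1 - t\<close>] binary_entropy_def by (simp add: field_simps)
qed

lemma abs_mult_log_le:
  fixes r :: real assumes "0 \<le> r" "r \<le> 2"
  shows "\<bar>r * log 2 r\<bar> \<le> 2 / ln 2"
proof (cases "r = 0")
  case False
  then have r: "0 < r" using assms by simp
  have "r * ln r \<le> r * (r - 1)"
    using r ln_le_minus_one[OF r] by (intro mult_left_mono) auto
  moreover have "- (r * ln r) \<le> 1 - r"
  proof -
    have "ln (1 / r) \<le> 1 / r - 1" using r by (intro ln_le_minus_one) auto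
    then have "r * (- ln r) \<le> r * (1 / r - 1)" using r by (intro mult_left_mono) (auto simp: ln_div)
    then show ?thesis using r by (simp add: algebra_simps)
  qed
  moreover have "r * (r - 1) \<le> r * 1" using assms by (intro mult_left_mono) auto
  ultimately have "\<bar>r * ln r\<bar> \<le> 2" using assms by linarith
  then show ?thesis by (simp add: log_def abs_div divide_right_mono)
qed simp

lemma affine_ge_mult_one_minus_abs:
  fixes a b c \<beta> :: real
  assumes "0 \<le> a" "0 \<le> b" "\<bar>c\<bar> \<le> 1" "2 * \<beta> \<le> a + b"
  shows "\<beta> * (1 - \<bar>c\<bar>) \<le> (a + b) / 2 + (a - b) / 2 * c"
proof -
  have "\<beta> * (1 - \<bar>c\<bar>) \<le> (a + b) / 2 * (1 - \<bar>c\<bar>)"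
    using assms by (intro mult_right_mono) auto
  also have "\<dots> \<le> (a + b) / 2 + (a - b) / 2 * c"
    using assms mult_nonneg_nonneg[of a c] mult_nonneg_nonneg[of b "- c"]
    by (cases "0 \<le> c") (simp_all add: field_simps)
  finally show ?thesis .
qed

lemma nn_integral_uniform_pm1:
  "(\<integral>\<^sup>+x. g x \<partial>uniform_count_measure {-1, 1 :: real}) = (g (-1) + g 1) / 2"
  unfolding uniform_count_measure_def
  by (simp add: nn_integral_point_measure_finite ennreal_divide_times add_divide_distrib
      divide_ennreal_def algebra_simps)

lemma (in prob_space) square_expectation_le:
  fixes X :: "'a \<Rightarrow> real"
  assumes "integrable M X" "integrable M (\<lambda>x. (X x)\<^sup>2)"
  shows "(expectation X)\<^sup>2 \<le> expectation (\<lambda>x. (X x)\<^sup>2)"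
proof -
  have "0 \<le> variance X" by simp
  then show ?thesis using variance_eq[OF assms] by simp
qed

lemma measure_density_real:
  assumes [measurable]: "g \<in> borel_measurable M" "A \<in> sets M" and "\<And>x. 0 \<le> g x"
  shows "measure (density M (\<lambda>x. ennreal (g x))) A = (\<integral>x. g x * indicator A x \<partial>M)"
proof -
  have "measure (density M (\<lambda>x. ennreal (g x))) A = enn2real (\<integral>\<^sup>+x. ennreal (g x) * indicator A x \<partial>M)"
    unfolding measure_def by (simp add: emeasure_density)
  also have "\<dots> = (\<integral>x. g x * indicator A x \<partial>M)"
    using assms by (intro enn2real_nn_integral_eq_integral) (auto simp: indicator_def)
  finally show ?thesis .
qed

lemma measurable_measure_slice:
  assumes "finite_measure P" and S: "S \<in> sets (P \<Otimes>\<^sub>M N)"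
  shows "(\<lambda>u. measure P {y. (y, u) \<in> S}) \<in> borel_measurable N"
proof -
  interpret P: finite_measure P by fact
  define Q where "Q = (\<lambda>(u, y). (y, u)) -` S \<inter> space (N \<Otimes>\<^sub>M P)"
  have "Q \<in> sets (N \<Otimes>\<^sub>M P)"
    unfolding Q_def using S by (intro measurable_sets[OF measurable_pair_swap']) auto
  then have "(\<lambda>u. enn2real (emeasure P (Pair u -` Q))) \<in> borel_measurable N"
    by (intro borel_measurable_enn2real P.measurable_emeasure_Pair)
  moreover have "Pair u -` Q = {y. (y, u) \<in> S}" if "u \<in> space N" for u
    using that sets.sets_into_space[OF S] by (auto simp: Q_def space_pair_measure)
  ultimately show ?thesis
    unfolding measure_def
    by (subst measurable_cong[where g = "\<lambda>u. enn2real (emeasure P (Pair u -` Q))"]) auto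
qed

lemma space_gen_sigma[simp]: "space (gen_sigma M V N) = space M"
  by (simp add: gen_sigma_def)

lemma measurable_gen_sigma: "V \<in> M \<rightarrow>\<^sub>M N \<Longrightarrow> V \<in> gen_sigma M V N \<rightarrow>\<^sub>M N"
  unfolding gen_sigma_def by (rule measurable_vimage_algebra1) (auto dest: measurable_space)

lemma sets_gen_sigma:
  "V \<in> M \<rightarrow>\<^sub>M N \<Longrightarrow> sets (gen_sigma M V N) = {V -` A \<inter> space M | A. A \<in> sets N}"
  unfolding gen_sigma_def by (rule sets_vimage_algebra2) (auto dest: measurable_space)

lemma subalgebra_gen_sigma: "V \<in> M \<rightarrow>\<^sub>M N \<Longrightarrow> subalgebra M (gen_sigma M V N)"
  unfolding subalgebra_def gen_sigma_def using sets_image_in_sets[OF refl] by auto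

lemma (in prob_space) sigma_finite_subalgebra_gen_sigma:
  assumes "V \<in> M \<rightarrow>\<^sub>M N"
  shows "sigma_finite_subalgebra M (gen_sigma M V N)"
proof -
  have "finite_measure_subalgebra M (gen_sigma M V N)"
    unfolding finite_measure_subalgebra_def finite_measure_subalgebra_axioms_def
    using subalgebra_gen_sigma[OF assms] by (auto simp: gen_sigma_def)
  then show ?thesis
    by (rule finite_measure_subalgebra_is_sigma_finite)
qed

section \<open>Binary decisions\<close>

lemma (in prob_space) integrable_mult_pm1:
  fixes X Z :: "'a \<Rightarrow> real"
  assumes "X \<in> borel_measurable M" "Z \<in> borel_measurable M"
    and "\<And>\<omega>. \<omega> \<in> space M \<Longrightarrow> X \<omega> \<in> {-1, 1}" "\<And>\<omega>. \<omega> \<in> space M \<Longrightarrow> Z \<omega> \<in> {-1, 1}"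
  shows "integrable M (\<lambda>\<omega>. Z \<omega> * X \<omega>)"
proof (rule integrable_const_bound[where B = 1])
  show "AE \<omega> in M. norm (Z \<omega> * X \<omega>) \<le> 1"
  proof (rule AE_I2)
    fix \<omega> assume "\<omega> \<in> space M"
    then show "norm (Z \<omega> * X \<omega>) \<le> 1"
      using assms(3,4)[of \<omega>] by auto
  qed
qed (use assms(1,2) in measurable)

lemma (in prob_space) prob_neq_pm1:
  fixes X Z :: "'a \<Rightarrow> real"
  assumes [measurable]: "X \<in> borel_measurable M" "Z \<in> borel_measurable M"
    and "\<And>\<omega>. \<omega> \<in> space M \<Longrightarrow> X \<omega> \<in> {-1, 1}" "\<And>\<omega>. \<omega> \<in> space M \<Longrightarrow> Z \<omega> \<in> {-1, 1}"
  shows "prob {\<omega> \<in> space M. X \<omega> \<noteq> Z \<omega>} = (1 - expectation (\<lambda>\<omega>. Z \<omega> * X \<omega>)) / 2"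
proof -
  have "integrable M (\<lambda>\<omega>. Z \<omega> * X \<omega>)"
    using assms by (rule integrable_mult_pm1)
  have "prob {\<omega> \<in> space M. X \<omega> \<noteq> Z \<omega>} = expectation (indicator {\<omega> \<in> space M. X \<omega> \<noteq> Z \<omega>})"
    by simp
  also have "\<dots> = expectation (\<lambda>\<omega>. (1 - Z \<omega> * X \<omega>) / 2)"
    using assms(3,4) by (intro Bochner_Integration.integral_cong refl) (fastforce simp: indicator_def)
  finally show ?thesis
    using \<open>integrable M (\<lambda>\<omega>. Z \<omega> * X \<omega>)\<close> by (simp add: prob_space)
qed

text \<open>The MAP decision d maximizes e E[X|F] pointwise among F-measurable e, and
  E[e X] = E[e E[X|F]].\<close>

lemma (in prob_space) BER_le_prob_neq:
  fixes X e :: "'a \<Rightarrow> real"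
  assumes F: "sigma_finite_subalgebra M F"
    and X[measurable]: "X \<in> borel_measurable M" and X_bin: "\<And>\<omega>. \<omega> \<in> space M \<Longrightarrow> X \<omega> \<in> {-1, 1}"
    and e[measurable]: "e \<in> borel_measurable F" and e_bin: "\<And>\<omega>. \<omega> \<in> space M \<Longrightarrow> e \<omega> \<in> {-1, 1}"
  shows "BER M F X \<le> prob {\<omega> \<in> space M. X \<omega> \<noteq> e \<omega>}"
proof -
  interpret F: sigma_finite_subalgebra M F by (rule F)
  let ?c = "real_cond_exp M F X"
  let ?d = "map_decision M F X"
  have d[measurable]: "?d \<in> borel_measurable F"
    unfolding map_decision_def by measurable
  have d_bin: "?d \<omega> \<in> {-1, 1}" for \<omega>
    unfolding map_decision_def by auto
  have d_M[measurable]: "?d \<in> borel_measurable M" and e_M[measurable]: "e \<in> borel_measurable M"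
    using measurable_from_subalg[OF F.subalg d] measurable_from_subalg[OF F.subalg e] by auto
  note e_cond = F.real_cond_exp_intg[OF integrable_mult_pm1[OF X e_M X_bin e_bin] e X]
  note d_cond = F.real_cond_exp_intg[OF integrable_mult_pm1[OF X d_M X_bin d_bin] d X]
  have "expectation (\<lambda>\<omega>. e \<omega> * ?c \<omega>) \<le> expectation (\<lambda>\<omega>. ?d \<omega> * ?c \<omega>)"
  proof (intro integral_mono e_cond(1) d_cond(1))
    fix \<omega> assume "\<omega> \<in> space M"
    then show "e \<omega> * ?c \<omega> \<le> ?d \<omega> * ?c \<omega>"
      using e_bin[of \<omega>] by (auto simp: map_decision_def)
  qed
  then have "expectation (\<lambda>\<omega>. e \<omega> * X \<omega>) \<le> expectation (\<lambda>\<omega>. ?d \<omega> * X \<omega>)"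
    using e_cond(2) d_cond(2) e_bin d_bin by simp
  then show ?thesis
    unfolding BER_def using e_bin d_bin X_bin by (simp add: prob_neq_pm1)
qed

lemma (in prob_space) AE_abs_cond_exp_le_1:
  fixes X :: "'a \<Rightarrow> real"
  assumes "sigma_finite_subalgebra M F" and [measurable]: "X \<in> borel_measurable M"
    and "\<And>\<omega>. \<omega> \<in> space M \<Longrightarrow> \<bar>X \<omega>\<bar> \<le> 1"
  shows "AE \<omega> in M. \<bar>real_cond_exp M F X \<omega>\<bar> \<le> 1"
proof -
  interpret F: sigma_finite_subalgebra M F by fact
  have "integrable M X"
    using assms(3) by (intro integrable_const_bound[where B = 1] AE_I2) auto
  have "AE \<omega> in M. real_cond_exp M F X \<omega> \<le> 1"
    by (rule F.real_cond_exp_le_c[OF \<open>integrable M X\<close>]) (use assms(3) in \<open>auto simp: abs_le_iff\<close>)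
  moreover have "AE \<omega> in M. real_cond_exp M F X \<omega> \<ge> -1"
    by (rule F.real_cond_exp_ge_c[OF \<open>integrable M X\<close>]) (use assms(3) in \<open>auto simp: abs_le_iff\<close>)
  ultimately show ?thesis
    by eventually_elim auto
qed

text \<open>The tower property gives E[X E[X|F]] = E[E[X|F]^2], and X^2 = 1.\<close>

lemma (in prob_space) mmse_pm1_eq:
  fixes X :: "'a \<Rightarrow> real"
  assumes F: "sigma_finite_subalgebra M F"
    and X[measurable]: "X \<in> borel_measurable M" and X_bin: "\<And>\<omega>. \<omega> \<in> space M \<Longrightarrow> X \<omega> \<in> {-1, 1}"
  shows "mmse M F X = 1 - expectation (\<lambda>\<omega>. (real_cond_exp M F X \<omega>)\<^sup>2)"
proof -
  interpret F: sigma_finite_subalgebra M F by (rule F)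
  let ?c = "real_cond_exp M F X"
  have c_bound: "AE \<omega> in M. \<bar>?c \<omega>\<bar> \<le> 1"
    using X_bin by (intro AE_abs_cond_exp_le_1[OF F X]) fastforce
  have "AE \<omega> in M. norm ((?c \<omega>)\<^sup>2) \<le> 1"
    using c_bound by eventually_elim (simp add: abs_square_le_1)
  then have int_sq: "integrable M (\<lambda>\<omega>. (?c \<omega>)\<^sup>2)"
    by (rule integrable_const_bound) simp
  have "AE \<omega> in M. norm (?c \<omega> * X \<omega>) \<le> 1"
    using c_bound AE_space
  proof eventually_elim
    case (elim \<omega>)
    then show ?case using X_bin[of \<omega>] by (auto simp: abs_mult)
  qed
  then have int_cX: "integrable M (\<lambda>\<omega>. ?c \<omega> * X \<omega>)"
    by (intro integrable_const_bound[where B = 1]) simp_all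
  have "mmse M F X = expectation (\<lambda>\<omega>. 1 - 2 * (?c \<omega> * X \<omega>) + (?c \<omega>)\<^sup>2)"
    unfolding mmse_def using X_bin
    by (intro Bochner_Integration.integral_cong refl) (fastforce simp: power2_diff algebra_simps)
  also have "\<dots> = 1 - 2 * expectation (\<lambda>\<omega>. ?c \<omega> * X \<omega>) + expectation (\<lambda>\<omega>. (?c \<omega>)\<^sup>2)"
    using int_cX int_sq by (simp add: prob_space)
  also have "expectation (\<lambda>\<omega>. ?c \<omega> * X \<omega>) = expectation (\<lambda>\<omega>. (?c \<omega>)\<^sup>2)"
    using F.real_cond_exp_intg(2)[OF int_cX borel_measurable_cond_exp X] by (simp add: power2_eq_square)
  finally show ?thesis
    by simp
qed

lemma (in prob_space) expectation_abs_cond_exp_le_sqrt_mmse: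
  fixes X :: "'a \<Rightarrow> real"
  assumes F: "sigma_finite_subalgebra M F"
    and X[measurable]: "X \<in> borel_measurable M" and X_bin: "\<And>\<omega>. \<omega> \<in> space M \<Longrightarrow> X \<omega> \<in> {-1, 1}"
  shows "expectation (\<lambda>\<omega>. \<bar>real_cond_exp M F X \<omega>\<bar>) \<le> sqrt (1 - mmse M F X)"
proof -
  interpret F: sigma_finite_subalgebra M F by (rule F)
  let ?c = "real_cond_exp M F X"
  have c_bound: "AE \<omega> in M. \<bar>?c \<omega>\<bar> \<le> 1"
    using X_bin by (intro AE_abs_cond_exp_le_1[OF F X]) fastforce
  have "AE \<omega> in M. norm (\<bar>?c \<omega>\<bar>\<^sup>2) \<le> 1"
    using c_bound by eventually_elim (simp add: abs_square_le_1)
  then have "integrable M (\<lambda>\<omega>. \<bar>?c \<omega>\<bar>\<^sup>2)"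
    by (rule integrable_const_bound) simp
  moreover have "integrable M (\<lambda>\<omega>. \<bar>?c \<omega>\<bar>)"
    by (rule integrable_const_bound[where B = 1]) (use c_bound in simp_all)
  ultimately have "(expectation (\<lambda>\<omega>. \<bar>?c \<omega>\<bar>))\<^sup>2 \<le> 1 - mmse M F X"
    using square_expectation_le[of "\<lambda>\<omega>. \<bar>?c \<omega>\<bar>"] by (simp add: mmse_pm1_eq[OF F X X_bin])
  then show ?thesis
    by (rule real_le_rsqrt)
qed

section \<open>Binary memoryless symmetric channels\<close>

locale bms =
  fixes W :: "real \<Rightarrow> ereal measure"
  assumes bms_channel: "bms_channel W"
begin

lemma sets_W_one[measurable_cong]: "sets (W 1) = sets borel"
  using bms_channel unfolding bms_channel_def by simp

lemma W_minus_one_eq_distr: "W (-1) = distr (W 1) borel uminus"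
  using bms_channel unfolding bms_channel_def by simp

lemma measurable_uminus_W_one: "uminus \<in> W 1 \<rightarrow>\<^sub>M (borel :: ereal measure)"
  by (simp add: measurable_cong_sets[OF sets_W_one refl])

lemma prob_space_W:
  assumes "x \<in> {-1, 1}"
  shows "prob_space (W x)"
proof -
  have "prob_space (W 1)"
    using bms_channel unfolding bms_channel_def by simp
  moreover from this have "prob_space (W (-1))"
    unfolding W_minus_one_eq_distr by (rule prob_space.prob_space_distr[OF _ measurable_uminus_W_one])
  ultimately show ?thesis
    using assms by blast
qed

lemma sets_W:
  assumes "x \<in> {-1, 1}"
  shows "sets (W x) = sets borel"
proof -
  have "sets (W (-1)) = sets borel"
    unfolding W_minus_one_eq_distr by (rule sets_distr)
  with assms sets_W_one show ?thesis
    by auto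
qed

lemma space_W: "x \<in> {-1, 1} \<Longrightarrow> space (W x) = UNIV"
  using sets_eq_imp_space_eq[OF sets_W[of x]] by simp

lemma measure_W_minus_one:
  "A \<in> sets borel \<Longrightarrow> measure (W (-1)) A = measure (W 1) (uminus -` A)"
  unfolding W_minus_one_eq_distr using space_W[of 1]
  by (simp add: measure_distr[OF measurable_uminus_W_one])

lemma measure_W_reflect:
  assumes D: "D \<in> sets borel"
  shows "measure (W 1) (uminus -` (UNIV - D)) = measure (W (-1)) (UNIV - D)"
    and "measure (W (-1)) (UNIV - uminus -` (UNIV - D)) = measure (W 1) D"
proof -
  have [measurable]: "uminus -` A \<in> sets borel" if "A \<in> sets borel" for A :: "ereal set"
  proof -
    have "(uminus :: ereal \<Rightarrow> ereal) \<in> borel_measurable borel" by simp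
    from measurable_sets[OF this that] show ?thesis by simp
  qed
  have "UNIV - uminus -` (UNIV - D) = uminus -` D" "uminus -` uminus -` D = D" by auto
  then show "measure (W 1) (uminus -` (UNIV - D)) = measure (W (-1)) (UNIV - D)"
    and "measure (W (-1)) (UNIV - uminus -` (UNIV - D)) = measure (W 1) D"
    using D by (simp_all add: measure_W_minus_one)
qed

lemma joint_kernel_measurable:
  "(\<lambda>x. distr (W x) (borel \<Otimes>\<^sub>M borel) (Pair x))
     \<in> uniform_count_measure {-1, 1 :: real} \<rightarrow>\<^sub>M prob_algebra (borel \<Otimes>\<^sub>M borel)"
proof -
  have "distr (W x) (borel \<Otimes>\<^sub>M borel) (Pair x) \<in> space (prob_algebra (borel \<Otimes>\<^sub>M borel))"
    if "x \<in> {-1, 1}" for x :: real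
  proof -
    have "Pair x \<in> W x \<rightarrow>\<^sub>M (borel \<Otimes>\<^sub>M borel)"
      by (simp add: measurable_cong_sets[OF sets_W[OF that] refl])
    then show ?thesis
      using prob_space.prob_space_distr[OF prob_space_W[OF that]] by (simp add: space_prob_algebra)
  qed
  then show ?thesis
    by (simp add: measurable_cong_sets[OF sets_uniform_count_measure_count_space refl])
qed

sublocale joint: prob_space "uniform_input_joint W"
  unfolding uniform_input_joint_def
  by (rule prob_space_bind'[OF _ joint_kernel_measurable])
     (simp add: space_prob_algebra prob_space_uniform_count_measure)

lemma sets_joint[simp, measurable_cong]: "sets (uniform_input_joint W) = sets (borel \<Otimes>\<^sub>M borel)"
  unfolding uniform_input_joint_def
  by (rule sets_bind) (auto simp: space_uniform_count_measure)

lemma nn_integral_joint: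
  assumes [measurable]: "f \<in> borel_measurable (borel \<Otimes>\<^sub>M borel)"
  shows "(\<integral>\<^sup>+z. f z \<partial>uniform_input_joint W)
    = ((\<integral>\<^sup>+y. f (-1, y) \<partial>W (-1)) + (\<integral>\<^sup>+y. f (1, y) \<partial>W 1)) / 2"
proof -
  have "(\<integral>\<^sup>+z. f z \<partial>distr (W x) (borel \<Otimes>\<^sub>M borel) (Pair x)) = (\<integral>\<^sup>+y. f (x, y) \<partial>W x)"
    if "x \<in> {-1, 1}" for x
    by (rule nn_integral_distr) (simp_all add: measurable_cong_sets[OF sets_W[OF that] refl])
  then show ?thesis
    unfolding uniform_input_joint_def
    by (simp add: nn_integral_bind[OF assms measurable_prob_algebraD[OF joint_kernel_measurable]]
        nn_integral_uniform_pm1)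
qed

definition output_law :: "ereal measure" where
  "output_law = distr (uniform_input_joint W) borel snd"

lemma sets_output_law[simp, measurable_cong]: "sets output_law = sets borel"
  by (simp add: output_law_def)

sublocale out: prob_space output_law
  unfolding output_law_def by (rule joint.prob_space_distr) simp

lemma nn_integral_output_law:
  assumes [measurable]: "g \<in> borel_measurable borel"
  shows "(\<integral>\<^sup>+y. g y \<partial>output_law) = ((\<integral>\<^sup>+y. g y \<partial>W (-1)) + (\<integral>\<^sup>+y. g y \<partial>W 1)) / 2"
  unfolding output_law_def by (simp add: nn_integral_distr nn_integral_joint)

lemma emeasure_output_law:
  assumes A: "A \<in> sets borel"
  shows "emeasure output_law A = (emeasure (W (-1)) A + emeasure (W 1) A) / 2"
proof -
  have "emeasure output_law A = (\<integral>\<^sup>+y. indicator A y \<partial>output_law)"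
    using A by simp
  also have "\<dots> = ((\<integral>\<^sup>+y. indicator A y \<partial>W (-1)) + (\<integral>\<^sup>+y. indicator A y \<partial>W 1)) / 2"
    using A by (intro nn_integral_output_law) simp
  finally show ?thesis
    using A sets_W[of 1] sets_W[of "-1"] by simp
qed

lemma absolutely_continuous_W:
  assumes "x \<in> {-1, 1}"
  shows "absolutely_continuous output_law (W x)"
proof -
  have "emeasure (W x) A = 0" if "A \<in> sets borel" "emeasure output_law A = 0" for A
    using that assms emeasure_output_law[of A] by (auto simp: ennreal_divide_eq_0_iff)
  then show ?thesis
    unfolding absolutely_continuous_def null_sets_def using sets_W[OF assms] by auto
qed

lemma density_RN_deriv_W:
  assumes "x \<in> {-1, 1}"
  shows "density output_law (RN_deriv output_law (W x)) = W x"
  by (rule out.density_RN_deriv[OF absolutely_continuous_W[OF assms]])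
     (simp_all add: sets_W[OF assms])

lemma AE_RN_deriv_W_sum:
  "AE y in output_law. RN_deriv output_law (W 1) y + RN_deriv output_law (W (-1)) y = 2"
proof -
  let ?f = "\<lambda>y. RN_deriv output_law (W 1) y + RN_deriv output_law (W (-1)) y"
  have [measurable]: "RN_deriv output_law (W x) \<in> borel_measurable output_law" for x
    by (rule borel_measurable_RN_deriv)
  have "density output_law ?f = density output_law (\<lambda>_. 2)"
  proof (rule measure_eqI)
    fix A assume "A \<in> sets (density output_law ?f)"
    then have A[measurable]: "A \<in> sets borel" by simp
    have "emeasure (density output_law ?f) A = (\<integral>\<^sup>+y. ?f y * indicator A y \<partial>output_law)"
      by (rule emeasure_density) simp_all
    also have "\<dots> = (\<integral>\<^sup>+y. RN_deriv output_law (W 1) y * indicator A y \<partial>output_law)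
          + (\<integral>\<^sup>+y. RN_deriv output_law (W (-1)) y * indicator A y \<partial>output_law)"
      by (subst nn_integral_add[symmetric]) (auto simp: distrib_right)
    also have "\<dots> = emeasure (W 1) A + emeasure (W (-1)) A"
      using density_RN_deriv_W[of 1] density_RN_deriv_W[of "-1"]
      by (simp add: emeasure_density[symmetric])
    also have "\<dots> = 2 * emeasure output_law A"
    proof -
      have "2 * (a / 2) = a" for a :: ennreal
        by (simp only: ennreal_times_divide mult.commute[of 2]) (rule ennreal_mult_divide_eq; simp)
      then show ?thesis
        using emeasure_output_law[of A] A by (simp add: add.commute)
    qed
    also have "\<dots> = emeasure (density output_law (\<lambda>_. 2)) A"
      by (simp add: emeasure_density nn_integral_cmult)
    finally show "emeasure (density output_law ?f) A = emeasure (density output_law (\<lambda>_. 2)) A" .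
  qed simp
  then show ?thesis
    using out.density_unique_iff[of ?f "\<lambda>_. 2"] by simp
qed

text \<open>For uniform input, posterior y = P(X = 1 | Y = y); the minimum only modifies it on the
  null set where the density of W 1 exceeds 2.\<close>

definition posterior :: "ereal \<Rightarrow> real" where
  "posterior y = min 1 (enn2real (RN_deriv output_law (W 1) y) / 2)"

lemma borel_measurable_posterior[measurable]: "posterior \<in> borel_measurable borel"
proof -
  have "RN_deriv output_law (W 1) \<in> borel_measurable borel"
    using borel_measurable_RN_deriv[of output_law "W 1"] by simp
  then show ?thesis
    unfolding posterior_def by measurable
qed

lemma posterior_nonneg: "0 \<le> posterior y"
  and posterior_le_1: "posterior y \<le> 1"
  unfolding posterior_def by auto

definition channel_density :: "real \<Rightarrow> ereal \<Rightarrow> real" where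
  "channel_density x y = (if x = 1 then 2 * posterior y else 2 * (1 - posterior y))"

lemma borel_measurable_channel_density[measurable]:
  "(\<lambda>(x, y). channel_density x y) \<in> borel_measurable (borel \<Otimes>\<^sub>M borel)"
  unfolding channel_density_def by measurable

lemma channel_density_nonneg: "0 \<le> channel_density x y"
  and channel_density_le_2: "channel_density x y \<le> 2"
  using posterior_nonneg[of y] posterior_le_1[of y] unfolding channel_density_def by auto

lemma W_eq_density:
  assumes x: "x \<in> {-1, 1}"
  shows "W x = density output_law (\<lambda>y. ennreal (channel_density x y))"
proof -
  have "AE y in output_law. RN_deriv output_law (W x) y = ennreal (channel_density x y)"
    using AE_RN_deriv_W_sum
  proof eventually_elim
    case (elim y)
    obtain a where a: "RN_deriv output_law (W 1) y = ennreal a" "0 \<le> a"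
      using elim by (cases "RN_deriv output_law (W 1) y" rule: ennreal_cases) auto
    obtain b where b: "RN_deriv output_law (W (-1)) y = ennreal b" "0 \<le> b"
      using elim by (cases "RN_deriv output_law (W (-1)) y" rule: ennreal_cases) auto
    have "ennreal (a + b) = ennreal 2"
      using elim a b by (simp flip: ennreal_plus)
    then have "a + b = 2"
      using a b by (subst (asm) ennreal_inj) auto
    then show ?case
      using x a b by (auto simp: channel_density_def posterior_def min_def)
  qed
  then have "density output_law (RN_deriv output_law (W x))
      = density output_law (\<lambda>y. ennreal (channel_density x y))"
    by (intro density_cong) simp_all
  then show ?thesis
    using density_RN_deriv_W[OF x] by simp
qed

definition input_law :: "real measure" where
  "input_law = distr (uniform_count_measure {-1, 1}) borel (\<lambda>x. x)"

lemma sets_input_law[simp, measurable_cong]: "sets input_law = sets borel"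
  by (simp add: input_law_def)

lemma measurable_uniform_pm1: "(\<lambda>x. x) \<in> uniform_count_measure {-1, 1 :: real} \<rightarrow>\<^sub>M borel"
  by (simp add: measurable_cong_sets[OF sets_uniform_count_measure_count_space refl])

sublocale input: prob_space input_law
  unfolding input_law_def
  by (rule prob_space.prob_space_distr[OF prob_space_uniform_count_measure measurable_uniform_pm1]) simp_all

sublocale input_out: pair_prob_space input_law output_law ..

lemma nn_integral_input_law:
  "f \<in> borel_measurable borel \<Longrightarrow> (\<integral>\<^sup>+x. f x \<partial>input_law) = (f (-1) + f 1) / 2"
  unfolding input_law_def by (simp add: nn_integral_distr[OF measurable_uniform_pm1] nn_integral_uniform_pm1)

lemma integral_input_law:
  fixes f :: "real \<Rightarrow> real"
  shows "f \<in> borel_measurable borel \<Longrightarrow> (\<integral>x. f x \<partial>input_law) = (f (-1) + f 1) / 2"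
  unfolding input_law_def by (simp add: integral_distr[OF measurable_uniform_pm1] integral_uniform_count_measure)

lemma distr_fst_joint: "distr (uniform_input_joint W) borel fst = input_law"
proof (rule measure_eqI)
  fix A :: "real set" assume "A \<in> sets (distr (uniform_input_joint W) borel fst)"
  then have A[measurable]: "A \<in> sets borel" by simp
  have "emeasure (distr (uniform_input_joint W) borel fst) A
      = (\<integral>\<^sup>+x. indicator A x \<partial>distr (uniform_input_joint W) borel fst)"
    using A by simp
  also have "\<dots> = (\<integral>\<^sup>+z. indicator A (fst z) \<partial>uniform_input_joint W)"
    by (rule nn_integral_distr) simp_all
  also have "\<dots> = (indicator A (-1 :: real) + indicator A (1 :: real)) / 2"
    using prob_space.emeasure_space_1[OF prob_space_W, of 1] prob_space.emeasure_space_1[OF prob_space_W, of "-1"]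
      space_W[of 1] space_W[of "-1"]
    by (simp add: nn_integral_joint)
  also have "\<dots> = emeasure input_law A"
    using A by (simp flip: nn_integral_indicator add: nn_integral_input_law)
  finally show "emeasure (distr (uniform_input_joint W) borel fst) A = emeasure input_law A" .
qed simp

lemma joint_eq_density:
  "uniform_input_joint W = density (input_law \<Otimes>\<^sub>M output_law) (\<lambda>(x, y). ennreal (channel_density x y))"
proof (rule measure_eqI)
  fix S assume "S \<in> sets (uniform_input_joint W)"
  then have S[measurable]: "S \<in> sets (borel \<Otimes>\<^sub>M borel)" by simp
  have slice: "(\<integral>\<^sup>+y. indicator S (x, y) \<partial>W x)
      = (\<integral>\<^sup>+y. ennreal (channel_density x y) * indicator S (x, y) \<partial>output_law)" if "x \<in> {-1, 1}" for x
    by (subst W_eq_density[OF that]) (simp add: nn_integral_density)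
  have "emeasure (uniform_input_joint W) S = (\<integral>\<^sup>+z. indicator S z \<partial>uniform_input_joint W)"
    by simp
  also have "\<dots> = ((\<integral>\<^sup>+y. indicator S (-1, y) \<partial>W (-1)) + (\<integral>\<^sup>+y. indicator S (1, y) \<partial>W 1)) / 2"
    by (rule nn_integral_joint) simp
  also have "\<dots> = (\<integral>\<^sup>+y. (ennreal (channel_density (-1) y) * indicator S (-1, y)
      + ennreal (channel_density 1 y) * indicator S (1, y)) / 2 \<partial>output_law)"
    by (simp add: slice nn_integral_add nn_integral_divide)
  also have "\<dots> = (\<integral>\<^sup>+y. \<integral>\<^sup>+x. ennreal (channel_density x y) * indicator S (x, y) \<partial>input_law \<partial>output_law)"
    by (simp add: nn_integral_input_law)
  also have "\<dots> = (\<integral>\<^sup>+z. ennreal (channel_density (fst z) (snd z)) * indicator S z \<partial>input_law \<Otimes>\<^sub>M output_law)"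
    using input_out.nn_integral_snd[of "\<lambda>z. ennreal (channel_density (fst z) (snd z)) * indicator S z"]
    by simp
  also have "\<dots> = emeasure (density (input_law \<Otimes>\<^sub>M output_law) (\<lambda>(x, y). ennreal (channel_density x y))) S"
    by (subst emeasure_density) (simp_all add: split_beta')
  finally show "emeasure (uniform_input_joint W) S
      = emeasure (density (input_law \<Otimes>\<^sub>M output_law) (\<lambda>(x, y). ennreal (channel_density x y))) S" .
qed (simp add: sets_pair_measure_cong[OF sets_input_law sets_output_law])

lemma capacity_eq_integral_pair:
  "bms_capacity W = (\<integral>z. channel_density (fst z) (snd z) * log 2 (channel_density (fst z) (snd z))
     \<partial>input_law \<Otimes>\<^sub>M output_law)"
proof -
  interpret J: information_space "uniform_input_joint W" 2
    by standard simp
  have sets_pair: "sets (input_law \<Otimes>\<^sub>M output_law) = sets (borel \<Otimes>\<^sub>M borel)"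
    by (rule sets_pair_measure_cong) simp_all
  have "bms_capacity W = prob_space.mutual_information (uniform_input_joint W) 2 input_law output_law fst snd"
    unfolding bms_capacity_def prob_space.mutual_information_def[OF joint.prob_space_axioms]
    by (intro arg_cong2[where f = "KL_divergence 2"] arg_cong2[where f = pair_measure] distr_cong)
       (simp_all add: sets_pair)
  also have "\<dots> = (\<integral>z. channel_density (fst z) (snd z) * log 2 (channel_density (fst z) (snd z) / (1 * 1))
     \<partial>input_law \<Otimes>\<^sub>M output_law)"
  proof (rule J.mutual_information_distr[where Px = "\<lambda>_. 1" and Py = "\<lambda>_. 1"
        and Pxy = "\<lambda>z. channel_density (fst z) (snd z)"])
    show "sigma_finite_measure input_law" "sigma_finite_measure output_law"
      by (simp_all add: prob_space_imp_sigma_finite input.prob_space_axioms out.prob_space_axioms)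
    have "distr (uniform_input_joint W) input_law fst = distr (uniform_input_joint W) borel fst"
      by (rule distr_cong) simp_all
    then show "distributed (uniform_input_joint W) input_law fst (\<lambda>_. ennreal 1)"
      unfolding distributed_def by (simp add: distr_fst_joint density_1)
    have "distr (uniform_input_joint W) output_law snd = distr (uniform_input_joint W) borel snd"
      by (rule distr_cong) simp_all
    then show "distributed (uniform_input_joint W) output_law snd (\<lambda>_. ennreal 1)"
      unfolding distributed_def by (simp add: output_law_def density_1)
    have "distr (uniform_input_joint W) (input_law \<Otimes>\<^sub>M output_law) (\<lambda>z. (fst z, snd z))
        = uniform_input_joint W"
      by (simp add: distr_id2 sets_pair)
    then show "distributed (uniform_input_joint W) (input_law \<Otimes>\<^sub>M output_law) (\<lambda>z. (fst z, snd z))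
        (\<lambda>z. ennreal (channel_density (fst z) (snd z)))"
      unfolding distributed_def using joint_eq_density
      by (auto simp: split_beta' measurable_cong_sets[OF sets_pair refl])
  qed (simp_all add: channel_density_nonneg)
  finally show ?thesis
    by simp
qed

lemma integrable_output_information:
  "integrable output_law
     (\<lambda>y. posterior y * log 2 (2 * posterior y) + (1 - posterior y) * log 2 (2 * (1 - posterior y)))"
proof (rule out.integrable_const_bound[where B = "2 / ln 2"])
  have half: "\<bar>x * log 2 (2 * x)\<bar> \<le> 1 / ln 2" if "0 \<le> x" "x \<le> 1" for x :: real
    using abs_mult_log_le[of "2 * x"] that by (simp add: abs_mult)
  show "AE y in output_law. norm (posterior y * log 2 (2 * posterior y)
      + (1 - posterior y) * log 2 (2 * (1 - posterior y))) \<le> 2 / ln 2"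
  proof (rule AE_I2)
    fix y
    have "\<bar>posterior y * log 2 (2 * posterior y)\<bar> \<le> 1 / ln 2"
      "\<bar>(1 - posterior y) * log 2 (2 * (1 - posterior y))\<bar> \<le> 1 / ln 2"
      using half[of "posterior y"] half[of "1 - posterior y"] posterior_nonneg[of y] posterior_le_1[of y]
      by auto
    then show "norm (posterior y * log 2 (2 * posterior y)
        + (1 - posterior y) * log 2 (2 * (1 - posterior y))) \<le> 2 / ln 2"
      by simp
  qed
qed simp

lemma capacity_eq_integral:
  "bms_capacity W = (\<integral>y. posterior y * log 2 (2 * posterior y)
     + (1 - posterior y) * log 2 (2 * (1 - posterior y)) \<partial>output_law)"
proof -
  let ?f = "\<lambda>x y. channel_density x y * log 2 (channel_density x y)"
  have "integrable (input_law \<Otimes>\<^sub>M output_law) (\<lambda>(x, y). ?f x y)"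
    using abs_mult_log_le channel_density_nonneg channel_density_le_2
    by (intro input_out.P.integrable_const_bound[where B = "2 / ln 2"] AE_I2) auto
  then have "bms_capacity W = (\<integral>y. \<integral>x. ?f x y \<partial>input_law \<partial>output_law)"
    by (simp add: capacity_eq_integral_pair input_out.integral_snd split_beta')
  also have "\<dots> = (\<integral>y. posterior y * log 2 (2 * posterior y)
     + (1 - posterior y) * log 2 (2 * (1 - posterior y)) \<partial>output_law)"
    by (intro Bochner_Integration.integral_cong refl)
       (simp add: integral_input_law channel_density_def field_simps)
  finally show ?thesis .
qed

lemma ln2_one_minus_capacity:
  "ln 2 * (1 - bms_capacity W) = (\<integral>y. binary_entropy (posterior y) \<partial>output_law)"
  using integrable_output_information posterior_nonneg posterior_le_1
  by (simp add: capacity_eq_integral binary_entropy_eq_bits out.prob_space)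

lemma integrable_binary_entropy_posterior:
  "integrable output_law (\<lambda>y. binary_entropy (posterior y))"
proof -
  have "integrable output_law (\<lambda>y. ln 2 * (1 - (posterior y * log 2 (2 * posterior y)
      + (1 - posterior y) * log 2 (2 * (1 - posterior y)))))"
    using integrable_output_information by simp
  then show ?thesis
    using posterior_nonneg posterior_le_1 by (simp add: binary_entropy_eq_bits)
qed

definition error_rate :: real where
  "error_rate = (\<integral>y. min (posterior y) (1 - posterior y) \<partial>output_law)"

lemma integrable_min_posterior: "integrable output_law (\<lambda>y. min (posterior y) (1 - posterior y))"
  using posterior_nonneg posterior_le_1
  by (intro out.integrable_const_bound[where B = 1] AE_I2) auto

lemma error_rate_nonneg: "0 \<le> error_rate"
  unfolding error_rate_def using posterior_nonneg posterior_le_1 by simp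

text \<open>Jensen's inequality and 2 min(t, 1 - t)^2 <= h(t).\<close>

lemma error_rate_le_capacity: "error_rate \<le> sqrt (ln 2 * (1 - bms_capacity W) / 2)"
proof -
  have "error_rate\<^sup>2 \<le> (\<integral>y. (min (posterior y) (1 - posterior y))\<^sup>2 \<partial>output_law)"
    unfolding error_rate_def using posterior_nonneg posterior_le_1
    by (intro out.square_expectation_le integrable_min_posterior
        out.integrable_const_bound[where B = 1] AE_I2) (auto simp: abs_le_square_iff power_le_one)
  also have "\<dots> \<le> (\<integral>y. binary_entropy (posterior y) / 2 \<partial>output_law)"
  proof (intro integral_mono integrable_binary_entropy_posterior integrable_divide)
    show "integrable output_law (\<lambda>y. (min (posterior y) (1 - posterior y))\<^sup>2)"
      using posterior_nonneg posterior_le_1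
      by (intro out.integrable_const_bound[where B = 1] AE_I2) (auto simp: abs_le_square_iff power_le_one)
    show "(min (posterior y) (1 - posterior y))\<^sup>2 \<le> binary_entropy (posterior y) / 2" for y
      using binary_entropy_ge_sq_min[OF posterior_nonneg posterior_le_1, of y] by simp
  qed
  also have "\<dots> = ln 2 * (1 - bms_capacity W) / 2"
    by (simp add: ln2_one_minus_capacity)
  finally show ?thesis
    using error_rate_nonneg by (simp add: real_le_rsqrt)
qed

text \<open>Twice the error probability, for uniform input, of deciding -1 exactly on D.\<close>

definition decision_error :: "ereal set \<Rightarrow> real" where
  "decision_error D = measure (W 1) D + measure (W (-1)) (UNIV - D)"

lemma integrable_channel_density_indicator:
  "A \<in> sets borel \<Longrightarrow> integrable output_law (\<lambda>y. channel_density x y * indicator A y)"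
  using channel_density_nonneg channel_density_le_2
  by (intro out.integrable_const_bound[where B = 2] AE_I2) (auto simp: indicator_def)

lemma measure_W_eq_integral:
  assumes "x \<in> {-1, 1}" "A \<in> sets borel"
  shows "measure (W x) A = (\<integral>y. channel_density x y * indicator A y \<partial>output_law)"
  unfolding W_eq_density[OF assms(1)]
  using assms(2) channel_density_nonneg by (intro measure_density_real) auto

lemma decision_error_eq_integral:
  assumes [measurable]: "D \<in> sets borel"
  shows "decision_error D = (\<integral>y. channel_density 1 y * indicator D y
    + channel_density (-1) y * indicator (UNIV - D) y \<partial>output_law)"
  unfolding decision_error_def
  by (simp add: measure_W_eq_integral integrable_channel_density_indicator)

lemma error_rate_le_decision_error:
  assumes D[measurable]: "D \<in> sets borel"
  shows "2 * error_rate \<le> decision_error D"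
proof -
  have "2 * error_rate = (\<integral>y. 2 * min (posterior y) (1 - posterior y) \<partial>output_law)"
    by (simp add: error_rate_def)
  also have "\<dots> \<le> decision_error D"
    unfolding decision_error_eq_integral[OF D]
  proof (intro integral_mono integrable_min_posterior integrable_mult_right
      Bochner_Integration.integrable_add integrable_channel_density_indicator)
    show "2 * min (posterior y) (1 - posterior y)
        \<le> channel_density 1 y * indicator D y + channel_density (-1) y * indicator (UNIV - D) y" for y
      by (auto simp: channel_density_def indicator_def min_def)
  qed simp_all
  finally show ?thesis .
qed

lemma decision_error_posterior: "decision_error {y. posterior y < 1/2} = 2 * error_rate"
proof -
  have [measurable]: "{y. posterior y < 1/2} \<in> sets borel"
    using borel_measurable_posterior by measurable
  show ?thesis
    unfolding decision_error_eq_integral[OF \<open>{y. posterior y < 1/2} \<in> sets borel\<close>] error_rate_def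
    by (simp flip: integral_mult_right_zero)
       (intro Bochner_Integration.integral_cong refl, auto simp: channel_density_def indicator_def)
qed

end

section \<open>Observing a binary input through the channel\<close>

locale bms_observation = bms W + prob_space M
  for W :: "real \<Rightarrow> ereal measure" and M :: "'a measure" +
  fixes X :: "'a \<Rightarrow> real" and Y :: "'a \<Rightarrow> ereal"
  assumes X_meas[measurable]: "X \<in> borel_measurable M"
    and X_bin: "\<And>\<omega>. \<omega> \<in> space M \<Longrightarrow> X \<omega> \<in> {-1, 1}"
    and Y_meas[measurable]: "Y \<in> borel_measurable M"
    and channel: "\<And>x B. x \<in> {-1, 1} \<Longrightarrow> B \<in> sets borel \<Longrightarrow>
        measure M {\<omega> \<in> space M. X \<omega> = x \<and> Y \<omega> \<in> B}
          = measure M {\<omega> \<in> space M. X \<omega> = x} * measure (W x) B"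
begin

lemma prob_X_pm1: "prob {\<omega> \<in> space M. X \<omega> = 1} + prob {\<omega> \<in> space M. X \<omega> = -1} = 1"
proof -
  have "prob {\<omega> \<in> space M. X \<omega> = 1} + prob {\<omega> \<in> space M. X \<omega> = -1}
      = prob ({\<omega> \<in> space M. X \<omega> = 1} \<union> {\<omega> \<in> space M. X \<omega> = -1})"
    by (subst finite_measure_Union) auto
  also have "{\<omega> \<in> space M. X \<omega> = 1} \<union> {\<omega> \<in> space M. X \<omega> = -1} = space M"
    using X_bin by auto
  finally show ?thesis
    by (simp add: prob_space)
qed

lemma BER_Y_le_decision:
  assumes D[measurable]: "D \<in> sets borel"
  shows "BER M (gen_sigma M Y borel) X
    \<le> prob {\<omega> \<in> space M. X \<omega> = 1} * measure (W 1) D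
      + prob {\<omega> \<in> space M. X \<omega> = -1} * measure (W (-1)) (UNIV - D)"
proof -
  let ?e = "\<lambda>\<omega>. if Y \<omega> \<in> D then -1 else 1 :: real"
  have [measurable]: "Y \<in> gen_sigma M Y borel \<rightarrow>\<^sub>M borel"
    by (rule measurable_gen_sigma) simp
  have "BER M (gen_sigma M Y borel) X \<le> prob {\<omega> \<in> space M. X \<omega> \<noteq> ?e \<omega>}"
    by (rule BER_le_prob_neq[OF sigma_finite_subalgebra_gen_sigma X_meas X_bin]) auto
  also have "{\<omega> \<in> space M. X \<omega> \<noteq> ?e \<omega>}
      = {\<omega> \<in> space M. X \<omega> = 1 \<and> Y \<omega> \<in> D} \<union> {\<omega> \<in> space M. X \<omega> = -1 \<and> Y \<omega> \<in> UNIV - D}"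
    using X_bin by auto
  also have "prob \<dots> = prob {\<omega> \<in> space M. X \<omega> = 1 \<and> Y \<omega> \<in> D} + prob {\<omega> \<in> space M. X \<omega> = -1 \<and> Y \<omega> \<in> UNIV - D}"
    by (rule finite_measure_Union) auto
  also have "\<dots> = prob {\<omega> \<in> space M. X \<omega> = 1} * measure (W 1) D
      + prob {\<omega> \<in> space M. X \<omega> = -1} * measure (W (-1)) (UNIV - D)"
    using channel[of 1 D] channel[of "-1" "UNIV - D"] by simp
  finally show ?thesis .
qed

lemma BER_Y_le_error_rate: "BER M (gen_sigma M Y borel) X \<le> error_rate"
proof -
  define D where "D = {y. posterior y < 1/2}"
  have D[measurable]: "D \<in> sets borel"
    unfolding D_def by measurable
  have D': "uminus -` (UNIV - D) \<in> sets borel"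
  proof -
    have "(uminus :: ereal \<Rightarrow> ereal) \<in> borel_measurable borel" by simp
    from measurable_sets[OF this, of "UNIV - D"] show ?thesis by auto
  qed
  have "2 * BER M (gen_sigma M Y borel) X
      \<le> (prob {\<omega> \<in> space M. X \<omega> = 1} + prob {\<omega> \<in> space M. X \<omega> = -1}) * decision_error D"
    using add_mono[OF BER_Y_le_decision[OF D] BER_Y_le_decision[OF D']]
    unfolding decision_error_def measure_W_reflect[OF D] by (simp add: algebra_simps)
  then show ?thesis
    using decision_error_posterior prob_X_pm1 by (simp add: D_def)
qed

end

locale bms_markov_observation = bms_observation W M X Y
  for W :: "real \<Rightarrow> ereal measure" and M :: "'a measure" and X Y +
  fixes U :: "'a \<Rightarrow> 'b" and N :: "'b measure"
  assumes U_meas[measurable]: "U \<in> M \<rightarrow>\<^sub>M N"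
    and markov: "\<And>x A B. x \<in> {-1, 1} \<Longrightarrow> A \<in> sets N \<Longrightarrow> B \<in> sets borel \<Longrightarrow>
        measure M {\<omega> \<in> space M. X \<omega> = x \<and> U \<omega> \<in> A \<and> Y \<omega> \<in> B}
          * measure M {\<omega> \<in> space M. X \<omega> = x}
        = measure M {\<omega> \<in> space M. X \<omega> = x \<and> U \<omega> \<in> A}
          * measure M {\<omega> \<in> space M. X \<omega> = x \<and> Y \<omega> \<in> B}"
begin

lemma prob_X_U_Y_factor:
  assumes x: "x \<in> {-1, 1}" and A: "A \<in> sets N" and B: "B \<in> sets borel"
  shows "prob {\<omega> \<in> space M. X \<omega> = x \<and> U \<omega> \<in> A \<and> Y \<omega> \<in> B}
    = prob {\<omega> \<in> space M. X \<omega> = x \<and> U \<omega> \<in> A} * measure (W x) B"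
proof (cases "prob {\<omega> \<in> space M. X \<omega> = x} = 0")
  case True
  have "prob {\<omega> \<in> space M. X \<omega> = x \<and> U \<omega> \<in> A \<and> Y \<omega> \<in> B} \<le> prob {\<omega> \<in> space M. X \<omega> = x}"
    "prob {\<omega> \<in> space M. X \<omega> = x \<and> U \<omega> \<in> A} \<le> prob {\<omega> \<in> space M. X \<omega> = x}"
    by (auto intro!: finite_measure_mono)
  then show ?thesis
    using True measure_nonneg[of M "{\<omega> \<in> space M. X \<omega> = x \<and> U \<omega> \<in> A \<and> Y \<omega> \<in> B}"]
      measure_nonneg[of M "{\<omega> \<in> space M. X \<omega> = x \<and> U \<omega> \<in> A}"]
    by simp
next
  case False
  then show ?thesis
    using markov[OF x A B] channel[OF x B] by (simp add: ac_simps)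
qed

lemma distr_Y_U_given_X:
  assumes x: "x \<in> {-1, 1}"
  defines "R \<equiv> density M (indicator {\<omega> \<in> space M. X \<omega> = x})"
  shows "distr R (borel \<Otimes>\<^sub>M N) (\<lambda>\<omega>. (Y \<omega>, U \<omega>)) = W x \<Otimes>\<^sub>M distr R N U"
proof (rule pair_measure_eqI[symmetric])
  have [measurable]: "{\<omega> \<in> space M. X \<omega> = x} \<in> sets M" by measurable
  have sets_R[measurable_cong]: "sets R = sets M" and space_R: "space R = space M"
    by (simp_all add: R_def)
  have emeasure_R: "emeasure R A = emeasure M ({\<omega> \<in> space M. X \<omega> = x} \<inter> A)" if "A \<in> sets M" for A
    unfolding R_def by (rule emeasure_restricted) (simp_all add: that)
  interpret R: finite_measure R
    unfolding R_def by (rule finite_measure_restricted) simp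
  show "sigma_finite_measure (W x)"
    using prob_space_W[OF x] by (simp add: prob_space_imp_sigma_finite)
  show "sigma_finite_measure (distr R N U)"
    by (rule finite_measure.sigma_finite_measure[OF R.finite_measure_distr]) (simp add: R_def)
  show "sets (W x \<Otimes>\<^sub>M distr R N U) = sets (distr R (borel \<Otimes>\<^sub>M N) (\<lambda>\<omega>. (Y \<omega>, U \<omega>)))"
    using sets_pair_measure_cong[OF sets_W[OF x] sets_distr[of R N U]] by simp
  fix B A assume B: "B \<in> sets (W x)" and A: "A \<in> sets (distr R N U)"
  then have [measurable]: "B \<in> sets borel" "A \<in> sets N"
    using sets_W[OF x] by auto
  have "emeasure (distr R (borel \<Otimes>\<^sub>M N) (\<lambda>\<omega>. (Y \<omega>, U \<omega>))) (B \<times> A)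
      = emeasure M {\<omega> \<in> space M. X \<omega> = x \<and> U \<omega> \<in> A \<and> Y \<omega> \<in> B}"
    by (subst emeasure_distr) (auto simp: space_R emeasure_R intro!: arg_cong[where f = "emeasure M"])
  also have "\<dots> = emeasure M {\<omega> \<in> space M. X \<omega> = x \<and> U \<omega> \<in> A} * emeasure (W x) B"
    using prob_X_U_Y_factor[OF x, of A B] finite_measure.emeasure_eq_measure[OF prob_space.finite_measure[OF prob_space_W[OF x]]]
    by (simp add: emeasure_eq_measure ennreal_mult)
  also have "emeasure M {\<omega> \<in> space M. X \<omega> = x \<and> U \<omega> \<in> A} = emeasure (distr R N U) A"
    by (subst emeasure_distr) (auto simp: space_R emeasure_R intro!: arg_cong[where f = "emeasure M"])
  finally show "emeasure (W x) B * emeasure (distr R N U) A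
      = emeasure (distr R (borel \<Otimes>\<^sub>M N) (\<lambda>\<omega>. (Y \<omega>, U \<omega>))) (B \<times> A)"
    by (simp add: mult.commute)
qed

lemma prob_X_Y_U_kernel:
  assumes x: "x \<in> {-1, 1}" and S[measurable]: "S \<in> sets (borel \<Otimes>\<^sub>M N)"
  shows "prob {\<omega> \<in> space M. X \<omega> = x \<and> (Y \<omega>, U \<omega>) \<in> S}
    = expectation (\<lambda>\<omega>. indicator {\<omega> \<in> space M. X \<omega> = x} \<omega> * measure (W x) {y. (y, U \<omega>) \<in> S})"
proof -
  define E where "E = {\<omega> \<in> space M. X \<omega> = x}"
  define R where "R = density M (indicator E)"
  have [measurable]: "E \<in> sets M" unfolding E_def by measurable
  have sets_R[measurable_cong]: "sets R = sets M" and space_R: "space R = space M"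
    by (simp_all add: R_def)
  interpret R: finite_measure R
    unfolding R_def by (rule finite_measure_restricted) simp
  interpret Wx: prob_space "W x" by (rule prob_space_W[OF x])
  interpret pair_sigma_finite "W x" "distr R N U"
    by (simp add: pair_sigma_finite_def Wx.sigma_finite_measure_axioms
        finite_measure.sigma_finite_measure[OF R.finite_measure_distr])
  have S': "S \<in> sets (W x \<Otimes>\<^sub>M distr R N U)"
    using sets_pair_measure_cong[OF sets_W[OF x] sets_distr[of R N U]] by simp
  have [measurable]: "(\<lambda>u. emeasure (W x) {y. (y, u) \<in> S}) \<in> borel_measurable N"
    using measurable_emeasure_Pair2[OF S'] by (simp add: vimage_def)
  have [measurable]: "(\<lambda>u. measure (W x) {y. (y, u) \<in> S}) \<in> borel_measurable N"
    using sets_pair_measure_cong[OF sets_W[OF x], of N N] by (intro measurable_measure_slice) auto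
  have "emeasure M {\<omega> \<in> space M. X \<omega> = x \<and> (Y \<omega>, U \<omega>) \<in> S}
      = emeasure (distr R (borel \<Otimes>\<^sub>M N) (\<lambda>\<omega>. (Y \<omega>, U \<omega>))) S"
    unfolding R_def by (subst emeasure_distr) (auto simp: emeasure_restricted E_def intro!: arg_cong[where f = "emeasure M"])
  also have "\<dots> = emeasure (W x \<Otimes>\<^sub>M distr R N U) S"
    unfolding R_def E_def distr_Y_U_given_X[OF x] ..
  also have "\<dots> = (\<integral>\<^sup>+u. emeasure (W x) {y. (y, u) \<in> S} \<partial>distr R N U)"
    by (simp add: emeasure_pair_measure_alt2[OF S'] vimage_def)
  also have "\<dots> = (\<integral>\<^sup>+\<omega>. emeasure (W x) {y. (y, U \<omega>) \<in> S} \<partial>R)"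
    by (rule nn_integral_distr) simp_all
  also have "\<dots> = (\<integral>\<^sup>+\<omega>. ennreal (indicator E \<omega> * measure (W x) {y. (y, U \<omega>) \<in> S}) \<partial>M)"
    unfolding R_def
    by (subst nn_integral_density) (auto simp: Wx.emeasure_eq_measure indicator_def intro!: nn_integral_cong)
  finally show ?thesis
    unfolding E_def[symmetric] measure_def
    by (subst enn2real_nn_integral_eq_integral[symmetric]) (auto intro!: nn_integral_cong)
qed

lemma measurable_measure_slice_U:
  assumes "x \<in> {-1, 1}" "T \<in> sets (borel \<Otimes>\<^sub>M N)"
  shows "(\<lambda>\<omega>. measure (W x) {y. (y, U \<omega>) \<in> T}) \<in> borel_measurable (gen_sigma M U N)"
proof -
  have "(\<lambda>u. measure (W x) {y. (y, u) \<in> T}) \<in> borel_measurable N"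
    using assms sets_pair_measure_cong[OF sets_W[OF assms(1)], of N N]
    by (intro measurable_measure_slice) (auto intro: prob_space.finite_measure prob_space_W)
  then show ?thesis
    using measurable_gen_sigma[OF U_meas] by (rule measurable_compose[rotated])
qed

text \<open>Conditional error probabilities, given X = 1 resp. X = -1 and U = U \<omega>, of the
  decision "X = 1 iff (Y, U) \<in> S".\<close>

definition miss :: "(ereal \<times> 'b) set \<Rightarrow> 'a \<Rightarrow> real" where
  "miss S \<omega> = measure (W 1) {y. (y, U \<omega>) \<notin> S}"

definition false_alarm :: "(ereal \<times> 'b) set \<Rightarrow> 'a \<Rightarrow> real" where
  "false_alarm S \<omega> = measure (W (-1)) {y. (y, U \<omega>) \<in> S}"

lemma miss_nonneg: "0 \<le> miss S \<omega>" and miss_le_1: "miss S \<omega> \<le> 1"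
  and false_alarm_nonneg: "0 \<le> false_alarm S \<omega>" and false_alarm_le_1: "false_alarm S \<omega> \<le> 1"
  unfolding miss_def false_alarm_def using prob_space.prob_le_1[OF prob_space_W] by auto

lemma Pair_U_in_space: "\<omega> \<in> space M \<Longrightarrow> (y, U \<omega>) \<in> space (borel \<Otimes>\<^sub>M N)"
  using measurable_space[OF U_meas] by (auto simp: space_pair_measure)

lemma measurable_miss_false_alarm:
  assumes "S \<in> sets (borel \<Otimes>\<^sub>M N)"
  shows "miss S \<in> borel_measurable (gen_sigma M U N)" "false_alarm S \<in> borel_measurable (gen_sigma M U N)"
    and "miss S \<in> borel_measurable M" "false_alarm S \<in> borel_measurable M"
proof -
  show miss: "miss S \<in> borel_measurable (gen_sigma M U N)"
  proof (rule measurable_cong[THEN iffD1, OF _ measurable_measure_slice_U[of 1 "space (borel \<Otimes>\<^sub>M N) - S"]])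
    fix \<omega> assume "\<omega> \<in> space (gen_sigma M U N)"
    then show "measure (W 1) {y. (y, U \<omega>) \<in> space (borel \<Otimes>\<^sub>M N) - S} = miss S \<omega>"
      by (simp add: miss_def Pair_U_in_space)
  qed (use assms in auto)
  show false_alarm: "false_alarm S \<in> borel_measurable (gen_sigma M U N)"
    unfolding false_alarm_def using assms by (rule measurable_measure_slice_U[rotated]) simp
  show "miss S \<in> borel_measurable M" "false_alarm S \<in> borel_measurable M"
    using measurable_from_subalg[OF subalgebra_gen_sigma[OF U_meas] miss]
      measurable_from_subalg[OF subalgebra_gen_sigma[OF U_meas] false_alarm] by auto
qed

lemma error_rate_le_miss_false_alarm:
  assumes S: "S \<in> sets (borel \<Otimes>\<^sub>M N)" and \<omega>: "\<omega> \<in> space M"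
  shows "2 * error_rate \<le> miss S \<omega> + false_alarm S \<omega>"
proof -
  have "(\<lambda>y. (y, U \<omega>)) \<in> borel \<rightarrow>\<^sub>M borel \<Otimes>\<^sub>M N"
    using measurable_space[OF U_meas \<omega>] by simp
  from measurable_sets[OF this S] have "{y. (y, U \<omega>) \<notin> S} \<in> sets borel"
    by (auto simp: vimage_def Compl_eq_Diff_UNIV[symmetric] Collect_neg_eq)
  moreover have "UNIV - {y. (y, U \<omega>) \<notin> S} = {y. (y, U \<omega>) \<in> S}"
    by auto
  ultimately show ?thesis
    using error_rate_le_decision_error[of "{y. (y, U \<omega>) \<notin> S}"]
    by (simp add: decision_error_def miss_def false_alarm_def)
qed

lemma prob_error_decision_Y_U:
  assumes S[measurable]: "S \<in> sets (borel \<Otimes>\<^sub>M N)"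
  shows "prob {\<omega> \<in> space M. X \<omega> \<noteq> (if (Y \<omega>, U \<omega>) \<in> S then 1 else -1)}
    = expectation (\<lambda>\<omega>. (miss S \<omega> + false_alarm S \<omega>) / 2 + (miss S \<omega> - false_alarm S \<omega>) / 2 * X \<omega>)"
proof -
  define Sc where "Sc = space (borel \<Otimes>\<^sub>M N) - S"
  have Sc[measurable]: "Sc \<in> sets (borel \<Otimes>\<^sub>M N)"
    unfolding Sc_def by auto
  note [measurable] = measurable_miss_false_alarm(3,4)[OF S]
  have int_indicator: "integrable M (\<lambda>\<omega>. indicator {\<omega> \<in> space M. X \<omega> = x} \<omega> * f \<omega>)"
    if [measurable]: "f \<in> borel_measurable M" and "\<And>\<omega>. 0 \<le> f \<omega> \<and> f \<omega> \<le> 1" for f :: "'a \<Rightarrow> real" and x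
    using that(2) by (intro integrable_const_bound[where B = 1] AE_I2) (auto simp: indicator_def)
  have "{\<omega> \<in> space M. X \<omega> \<noteq> (if (Y \<omega>, U \<omega>) \<in> S then 1 else -1)}
      = {\<omega> \<in> space M. X \<omega> = 1 \<and> (Y \<omega>, U \<omega>) \<in> Sc} \<union> {\<omega> \<in> space M. X \<omega> = -1 \<and> (Y \<omega>, U \<omega>) \<in> S}"
    using X_bin measurable_space[OF U_meas] by (auto simp: Sc_def space_pair_measure)
  then have "prob {\<omega> \<in> space M. X \<omega> \<noteq> (if (Y \<omega>, U \<omega>) \<in> S then 1 else -1)}
      = prob {\<omega> \<in> space M. X \<omega> = 1 \<and> (Y \<omega>, U \<omega>) \<in> Sc} + prob {\<omega> \<in> space M. X \<omega> = -1 \<and> (Y \<omega>, U \<omega>) \<in> S}"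
    by (simp only:) (rule finite_measure_Union; auto simp: Sc_def)
  also have "\<dots> = expectation (\<lambda>\<omega>. indicator {\<omega> \<in> space M. X \<omega> = 1} \<omega> * miss S \<omega>)
      + expectation (\<lambda>\<omega>. indicator {\<omega> \<in> space M. X \<omega> = -1} \<omega> * false_alarm S \<omega>)"
    using prob_X_Y_U_kernel[of 1 Sc] prob_X_Y_U_kernel[of "-1" S]
    by (simp add: Sc_def Pair_U_in_space miss_def false_alarm_def cong: Bochner_Integration.integral_cong)
  also have "\<dots> = expectation (\<lambda>\<omega>. indicator {\<omega> \<in> space M. X \<omega> = 1} \<omega> * miss S \<omega>
      + indicator {\<omega> \<in> space M. X \<omega> = -1} \<omega> * false_alarm S \<omega>)"
    using miss_nonneg miss_le_1 false_alarm_nonneg false_alarm_le_1 by (simp add: int_indicator)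
  also have "\<dots> = expectation (\<lambda>\<omega>. (miss S \<omega> + false_alarm S \<omega>) / 2 + (miss S \<omega> - false_alarm S \<omega>) / 2 * X \<omega>)"
    using X_bin by (intro Bochner_Integration.integral_cong refl) (fastforce simp: indicator_def field_simps)
  finally show ?thesis .
qed

lemma prob_error_decision_Y_U_cond_exp:
  assumes S[measurable]: "S \<in> sets (borel \<Otimes>\<^sub>M N)"
  defines "c \<equiv> real_cond_exp M (gen_sigma M U N) X"
  shows "prob {\<omega> \<in> space M. X \<omega> \<noteq> (if (Y \<omega>, U \<omega>) \<in> S then 1 else -1)}
      = expectation (\<lambda>\<omega>. (miss S \<omega> + false_alarm S \<omega>) / 2 + (miss S \<omega> - false_alarm S \<omega>) / 2 * c \<omega>)"
    and "integrable M (\<lambda>\<omega>. (miss S \<omega> + false_alarm S \<omega>) / 2 + (miss S \<omega> - false_alarm S \<omega>) / 2 * c \<omega>)"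
proof -
  interpret FU: sigma_finite_subalgebra M "gen_sigma M U N"
    by (rule sigma_finite_subalgebra_gen_sigma[OF U_meas])
  let ?a = "miss S" and ?b = "false_alarm S"
  note [measurable] = measurable_miss_false_alarm(3,4)[OF S]
  have ab_FU: "(\<lambda>\<omega>. (?a \<omega> - ?b \<omega>) / 2) \<in> borel_measurable (gen_sigma M U N)"
    using measurable_miss_false_alarm(1,2)[OF S] by measurable
  have bounds: "0 \<le> ?a \<omega>" "?a \<omega> \<le> 1" "0 \<le> ?b \<omega>" "?b \<omega> \<le> 1" for \<omega>
    by (simp_all add: miss_nonneg miss_le_1 false_alarm_nonneg false_alarm_le_1)
  have "norm ((?a \<omega> + ?b \<omega>) / 2) \<le> 1" for \<omega>
    using bounds[of \<omega>] by simp
  then have int_ab: "integrable M (\<lambda>\<omega>. (?a \<omega> + ?b \<omega>) / 2)"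
    by (intro integrable_const_bound[where B = 1] AE_I2) simp_all
  have "norm ((?a \<omega> - ?b \<omega>) / 2 * X \<omega>) \<le> 1" if "\<omega> \<in> space M" for \<omega>
    using X_bin[OF that] bounds[of \<omega>] by (auto simp: abs_mult)
  then have int_abX: "integrable M (\<lambda>\<omega>. (?a \<omega> - ?b \<omega>) / 2 * X \<omega>)"
    by (intro integrable_const_bound[where B = 1] AE_I2) simp_all
  note tower = FU.real_cond_exp_intg[OF int_abX ab_FU X_meas, folded c_def]
  show "integrable M (\<lambda>\<omega>. (?a \<omega> + ?b \<omega>) / 2 + (?a \<omega> - ?b \<omega>) / 2 * c \<omega>)"
    using int_ab tower(1) by simp
  have "prob {\<omega> \<in> space M. X \<omega> \<noteq> (if (Y \<omega>, U \<omega>) \<in> S then 1 else -1)}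
      = expectation (\<lambda>\<omega>. (?a \<omega> + ?b \<omega>) / 2 + (?a \<omega> - ?b \<omega>) / 2 * X \<omega>)"
    by (rule prob_error_decision_Y_U[OF S])
  also have "\<dots> = expectation (\<lambda>\<omega>. (?a \<omega> + ?b \<omega>) / 2 + (?a \<omega> - ?b \<omega>) / 2 * c \<omega>)"
    using int_ab int_abX tower by simp
  finally show "prob {\<omega> \<in> space M. X \<omega> \<noteq> (if (Y \<omega>, U \<omega>) \<in> S then 1 else -1)}
      = expectation (\<lambda>\<omega>. (?a \<omega> + ?b \<omega>) / 2 + (?a \<omega> - ?b \<omega>) / 2 * c \<omega>)" .
qed

lemma error_rate_mult_le_prob_error:
  assumes S: "S \<in> sets (borel \<Otimes>\<^sub>M N)"
  shows "error_rate * (1 - expectation (\<lambda>\<omega>. \<bar>real_cond_exp M (gen_sigma M U N) X \<omega>\<bar>))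
    \<le> prob {\<omega> \<in> space M. X \<omega> \<noteq> (if (Y \<omega>, U \<omega>) \<in> S then 1 else -1)}"
proof -
  let ?c = "real_cond_exp M (gen_sigma M U N) X"
  let ?a = "miss S" and ?b = "false_alarm S"
  have c_bound: "AE \<omega> in M. \<bar>?c \<omega>\<bar> \<le> 1"
    using X_bin by (intro AE_abs_cond_exp_le_1[OF sigma_finite_subalgebra_gen_sigma[OF U_meas] X_meas]) fastforce
  have int_c: "integrable M (\<lambda>\<omega>. \<bar>?c \<omega>\<bar>)"
    by (rule integrable_const_bound[where B = 1]) (use c_bound in simp_all)
  have "error_rate * (1 - expectation (\<lambda>\<omega>. \<bar>?c \<omega>\<bar>)) = expectation (\<lambda>\<omega>. error_rate * (1 - \<bar>?c \<omega>\<bar>))"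
    using int_c by (simp add: prob_space right_diff_distrib)
  also have "\<dots> \<le> expectation (\<lambda>\<omega>. (?a \<omega> + ?b \<omega>) / 2 + (?a \<omega> - ?b \<omega>) / 2 * ?c \<omega>)"
  proof (rule integral_mono_AE)
    show "integrable M (\<lambda>\<omega>. error_rate * (1 - \<bar>?c \<omega>\<bar>))"
      using int_c by simp
    show "integrable M (\<lambda>\<omega>. (?a \<omega> + ?b \<omega>) / 2 + (?a \<omega> - ?b \<omega>) / 2 * ?c \<omega>)"
      by (rule prob_error_decision_Y_U_cond_exp(2)[OF S])
    show "AE \<omega> in M. error_rate * (1 - \<bar>?c \<omega>\<bar>) \<le> (?a \<omega> + ?b \<omega>) / 2 + (?a \<omega> - ?b \<omega>) / 2 * ?c \<omega>"
      using c_bound AE_space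
    proof eventually_elim
      case (elim \<omega>)
      then show ?case
        using error_rate_le_miss_false_alarm[OF S] miss_nonneg false_alarm_nonneg
        by (intro affine_ge_mult_one_minus_abs) auto
    qed
  qed
  also have "\<dots> = prob {\<omega> \<in> space M. X \<omega> \<noteq> (if (Y \<omega>, U \<omega>) \<in> S then 1 else -1)}"
    by (rule prob_error_decision_Y_U_cond_exp(1)[OF S, symmetric])
  finally show ?thesis .
qed

lemma error_rate_mult_le_BER_Y_U:
  "error_rate * (1 - expectation (\<lambda>\<omega>. \<bar>real_cond_exp M (gen_sigma M U N) X \<omega>\<bar>))
    \<le> BER M (gen_sigma M (\<lambda>\<omega>. (Y \<omega>, U \<omega>)) (borel \<Otimes>\<^sub>M N)) X"
proof -
  let ?F = "gen_sigma M (\<lambda>\<omega>. (Y \<omega>, U \<omega>)) (borel \<Otimes>\<^sub>M N)"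
  have YU: "(\<lambda>\<omega>. (Y \<omega>, U \<omega>)) \<in> M \<rightarrow>\<^sub>M borel \<Otimes>\<^sub>M N"
    by measurable
  interpret F: sigma_finite_subalgebra M ?F
    by (rule sigma_finite_subalgebra_gen_sigma[OF YU])
  have "{\<omega> \<in> space ?F. 0 \<le> real_cond_exp M ?F X \<omega>} \<in> sets ?F"
    by measurable
  then obtain S where S: "S \<in> sets (borel \<Otimes>\<^sub>M N)"
    and MAP: "{\<omega> \<in> space M. 0 \<le> real_cond_exp M ?F X \<omega>} = (\<lambda>\<omega>. (Y \<omega>, U \<omega>)) -` S \<inter> space M"
    unfolding sets_gen_sigma[OF YU] space_gen_sigma by blast
  have "0 \<le> real_cond_exp M ?F X \<omega> \<longleftrightarrow> (Y \<omega>, U \<omega>) \<in> S" if "\<omega> \<in> space M" for \<omega>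
    using MAP that by blast
  then have "BER M ?F X = prob {\<omega> \<in> space M. X \<omega> \<noteq> (if (Y \<omega>, U \<omega>) \<in> S then 1 else -1)}"
    unfolding BER_def map_decision_def by (intro arg_cong[where f = prob] Collect_cong) auto
  with error_rate_mult_le_prob_error[OF S] show ?thesis
    by simp
qed

end

theorem lemma22:
  fixes M :: "'a measure" and X :: "'a \<Rightarrow> real" and Y :: "'a \<Rightarrow> ereal"
    and U :: "'a \<Rightarrow> 'b" and N :: "'b measure" and W :: "real \<Rightarrow> ereal measure"
  assumes "prob_space M"
    and X_meas: "X \<in> borel_measurable M"
    and X_bin: "\<And>\<omega>. \<omega> \<in> space M \<Longrightarrow> X \<omega> \<in> {-1, 1}"
    and Y_meas: "Y \<in> borel_measurable M"
    and U_meas: "U \<in> measurable M N"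
    and bms: "bms_channel W"
    and channel: "\<And>x B. x \<in> {-1, 1} \<Longrightarrow> B \<in> sets borel \<Longrightarrow>
        measure M {\<omega> \<in> space M. X \<omega> = x \<and> Y \<omega> \<in> B}
          = measure M {\<omega> \<in> space M. X \<omega> = x} * measure (W x) B"
    and markov: "\<And>x A B. x \<in> {-1, 1} \<Longrightarrow> A \<in> sets N \<Longrightarrow> B \<in> sets borel \<Longrightarrow>
        measure M {\<omega> \<in> space M. X \<omega> = x \<and> U \<omega> \<in> A \<and> Y \<omega> \<in> B}
          * measure M {\<omega> \<in> space M. X \<omega> = x}
        = measure M {\<omega> \<in> space M. X \<omega> = x \<and> U \<omega> \<in> A}
          * measure M {\<omega> \<in> space M. X \<omega> = x \<and> Y \<omega> \<in> B}"
  shows "BER M (gen_sigma M (\<lambda>\<omega>. (Y \<omega>, U \<omega>)) (borel \<Otimes>\<^sub>M N)) X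
           \<ge> BER M (gen_sigma M Y borel) X
             - sqrt (ln 2 * (1 - bms_capacity W) * (1 - mmse M (gen_sigma M U N) X) / 2)"
proof -
  interpret bms_markov_observation W M X Y U N
    by (intro bms_markov_observation.intro bms_observation.intro bms_markov_observation_axioms.intro
        bms_observation_axioms.intro bms.intro assms)
  let ?E = "expectation (\<lambda>\<omega>. \<bar>real_cond_exp M (gen_sigma M U N) X \<omega>\<bar>)"
  have E: "0 \<le> ?E" "?E \<le> sqrt (1 - mmse M (gen_sigma M U N) X)"
    using expectation_abs_cond_exp_le_sqrt_mmse[OF sigma_finite_subalgebra_gen_sigma[OF U_meas] X_meas X_bin]
    by simp_all
  have "error_rate * ?E \<le> sqrt (ln 2 * (1 - bms_capacity W) / 2) * sqrt (1 - mmse M (gen_sigma M U N) X)"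
    by (rule mult_mono[OF error_rate_le_capacity E(2) order_trans[OF error_rate_nonneg error_rate_le_capacity] E(1)])
  also have "\<dots> = sqrt (ln 2 * (1 - bms_capacity W) * (1 - mmse M (gen_sigma M U N) X) / 2)"
    by (simp flip: real_sqrt_mult)
  finally show ?thesis
    using BER_Y_le_error_rate error_rate_mult_le_BER_Y_U by (simp add: right_diff_distrib)
qed

end
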